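(* Let $(D,\vec F,0)$ and $(D',\vec F',0')$ be decision graphs and let $\ell:D\to D'$ satisfy $\ell(0)=0'$ and $\ell({\cal O}(v))={\cal O}(\ell(v))$ for all $v\in D$. Let $n\geq1$, and let $L_n$ and $L'_n$ be the Boolean functions associated with the game-graphs $G_n(D)$ and $G_n(D')$. Then $\ell$ maps $\partial G_n(D)$ into $\partial G_n(D')$, and $$L'_n(x)=L_n(x\circ\ell)\qquad\text{for all } x\in\{0,1\}^{\partial G_n(D')}.$$
   Context: **Decision graph.** A decision graph is a triple $(D,\vec F,0)$ where $(D,\vec F)$ is a directed graph, every $w\in D$ is reachable from $0$ by a directed path, $|w|=|v|+1$ for every $(v,w)\in\vec F$ (where $|w|$ denotes the directed graph distance from $0$ to $w$), and ${\cal O}(w):=\{u:(w,u)\in\vec F\}\neq\emptyset$ for all $w$. **Game-graph $G_n(D)$.** It has vertex set $\{w\in D:|w|\leq n\}$ and edges the elements of $\vec F$ between such vertices, with root $0$. Its set of possible outcomes is $\partial G_n(D)=\{w:|w|=n\}$. The turn function is $\tau(v)=1$ if $|v|$ is even and $\tau(v)=2$ if $|v|$ is odd, for $|v|<n$. **Associated Boolean function $L_n$.** For $x:\partial G_n(D)\to\{0,1\}$, extend to $\bar x$ by $\bar x=x$ at level $n$ and, for $|v|<n$, $\bar x(v)=\min_{w\in{\cal O}(v)}\bar x(w)$ if $|v|$ is even and $\bar x(v)=\max_{w\in{\cal O}(v)}\bar x(w)$ if $|v|$ is odd. Set $L_n(x):=\bar x(0)$. Also $(x\circ\ell)(v)=x(\ell(v))$.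 *)

theory Defs
  imports Main
begin

definition out_nbrs :: "('a \<times> 'a) set \<Rightarrow> 'a \<Rightarrow> 'a set" where
  "out_nbrs E w = {u. (w, u) \<in> E}"

definition lvl :: "('a \<times> 'a) set \<Rightarrow> 'a \<Rightarrow> 'a \<Rightarrow> nat" where
  "lvl E r w = (LEAST k. (r, w) \<in> E ^^ k)"

definition decision_graph :: "'a set \<Rightarrow> ('a \<times> 'a) set \<Rightarrow> 'a \<Rightarrow> bool" where
  "decision_graph D E r \<longleftrightarrow>
     E \<subseteq> D \<times> D \<and> r \<in> D \<and>
     (\<forall>w\<in>D. (r, w) \<in> E\<^sup>*) \<and>
     (\<forall>(v, w)\<in>E. lvl E r w = lvl E r v + 1) \<and>
     (\<forall>w\<in>D. out_nbrs E w \<noteq> {})"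

text \<open>Possible outcomes of the game graph G_n(D): the vertices at level n.\<close>
definition outcomes :: "'a set \<Rightarrow> ('a \<times> 'a) set \<Rightarrow> 'a \<Rightarrow> nat \<Rightarrow> 'a set" where
  "outcomes D E r n = {w \<in> D. lvl E r w = n}"

text \<open>The extension xbar, computed for vertices at level n - k:
  at level n it is x; at even levels the minimum, at odd levels the maximum over children
  (Boolean values: False = 0, True = 1; INF/SUP on bool are min/max).\<close>
primrec xbar :: "('a \<times> 'a) set \<Rightarrow> 'a \<Rightarrow> ('a \<Rightarrow> bool) \<Rightarrow> nat \<Rightarrow> 'a \<Rightarrow> bool" where
  "xbar E r x 0 v = x v"
| "xbar E r x (Suc k) v =
     (if even (lvl E r v) then (INF w\<in>out_nbrs E v. xbar E r x k w)
      else (SUP w\<in>out_nbrs E v. xbar E r x k w))"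

definition Lfun :: "('a \<times> 'a) set \<Rightarrow> 'a \<Rightarrow> nat \<Rightarrow> ('a \<Rightarrow> bool) \<Rightarrow> bool" where
  "Lfun E r n x = xbar E r x n r"

end

theory Submission
  imports Defs
begin

text \<open>Levels increase by one along every edge, so every path from the root to w has length
  exactly |w|. The map l sends edges to edges, hence root paths to root paths of the same length,
  and therefore preserves levels; in particular it maps outcomes to outcomes and respects the
  parity deciding between min and max. Since it also maps the children of v onto the children
  of l v, the recursion defining xbar commutes with l, level by level.\<close>

lemma lvl_eq_of_relpow:
  assumes "decision_graph D E r" and "(r, w) \<in> E ^^ k"
  shows "lvl E r w = k"
  using assms(2)
proof (induction k arbitrary: w)
  case 0
  then show ?case unfolding lvl_def by (intro Least_equality) auto
next
  case (Suc k)
  then obtain u where u: "(r, u) \<in> E ^^ k" "(u, w) \<in> E" by auto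
  have "lvl E r w = lvl E r u + 1"
    using assms(1) u(2) unfolding decision_graph_def by blast
  with Suc.IH[OF u(1)] show ?case by simp
qed

lemma relpow_lvl:
  assumes "decision_graph D E r" and "w \<in> D"
  shows "(r, w) \<in> E ^^ lvl E r w"
proof -
  have "(r, w) \<in> E\<^sup>*" using assms unfolding decision_graph_def by blast
  then obtain k where "(r, w) \<in> E ^^ k" using rtrancl_power by blast
  then show ?thesis unfolding lvl_def by (rule LeastI)
qed

lemma relpow_map:
  assumes "\<forall>(u, w)\<in>E. (l u, l w) \<in> E'" and "(a, w) \<in> E ^^ k"
  shows "(l a, l w) \<in> E' ^^ k"
  using assms(2)
proof (induction k arbitrary: w)
  case (Suc k)
  then obtain u where "(a, u) \<in> E ^^ k" "(u, w) \<in> E" by auto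
  with Suc.IH assms(1) have "(l a, l u) \<in> E' ^^ k" "(l u, l w) \<in> E'" by auto
  then show ?case by auto
qed simp

lemma lvl_map:
  assumes "decision_graph D E r" and "decision_graph D' E' r'" and "l r = r'"
    and "\<forall>v\<in>D. l ` out_nbrs E v = out_nbrs E' (l v)" and "v \<in> D"
  shows "lvl E' r' (l v) = lvl E r v"
proof -
  have "E \<subseteq> D \<times> D" using assms(1) unfolding decision_graph_def by blast
  with assms(4) have "\<forall>(u, w)\<in>E. (l u, l w) \<in> E'"
    unfolding out_nbrs_def by blast
  from relpow_map[OF this relpow_lvl[OF assms(1,5)]] assms(3)
  show ?thesis by (simp add: lvl_eq_of_relpow[OF assms(2)])
qed

lemma xbar_map:
  assumes "decision_graph D E r" and "decision_graph D' E' r'" and "l r = r'"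
    and "\<forall>v\<in>D. l ` out_nbrs E v = out_nbrs E' (l v)" and "v \<in> D"
  shows "xbar E' r' x k (l v) = xbar E r (x \<circ> l) k v"
  using assms(5)
proof (induction k arbitrary: v)
  case (Suc k)
  have children: "out_nbrs E v \<subseteq> D"
    using assms(1) unfolding decision_graph_def out_nbrs_def by auto
  have images: "out_nbrs E' (l v) = l ` out_nbrs E v"
    using assms(4) Suc.prems by auto
  have IH: "\<And>w. w \<in> out_nbrs E v \<Longrightarrow> xbar E' r' x k (l w) = xbar E r (x \<circ> l) k w"
    using Suc.IH children by blast
  have "(INF w\<in>out_nbrs E' (l v). xbar E' r' x k w) = (INF w\<in>out_nbrs E v. xbar E r (x \<circ> l) k w)"
    "(SUP w\<in>out_nbrs E' (l v). xbar E' r' x k w) = (SUP w\<in>out_nbrs E v. xbar E r (x \<circ> l) k w)"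
    unfolding images image_image using IH by (auto intro: INF_cong SUP_cong)
  with lvl_map[OF assms(1-4) Suc.prems] show ?case by (simp del: comp_apply)
qed simp

theorem lemma8:
  fixes D :: "'a set" and E :: "('a \<times> 'a) set" and r :: 'a
    and D' :: "'b set" and E' :: "('b \<times> 'b) set" and r' :: 'b
    and l :: "'a \<Rightarrow> 'b" and n :: nat
  assumes "decision_graph D E r" and "decision_graph D' E' r'"
    and "l ` D \<subseteq> D'" and "l r = r'"
    and "\<forall>v\<in>D. l ` out_nbrs E v = out_nbrs E' (l v)"
    and "n \<ge> 1"
  shows "l ` outcomes D E r n \<subseteq> outcomes D' E' r' n \<and>
         (\<forall>x :: 'b \<Rightarrow> bool. Lfun E' r' n x = Lfun E r n (x \<circ> l))"
proof
  show "l ` outcomes D E r n \<subseteq> outcomes D' E' r' n"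
    using lvl_map[OF assms(1,2,4,5)] assms(3) unfolding outcomes_def by auto
  have "r \<in> D" using assms(1) unfolding decision_graph_def by blast
  from xbar_map[OF assms(1,2,4,5) this] assms(4)
  show "\<forall>x :: 'b \<Rightarrow> bool. Lfun E' r' n x = Lfun E r n (x \<circ> l)"
    unfolding Lfun_def by simp
qed

end
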